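(* Let $n\geq 6$ and $k\in\{3,\dots,n-3\}$. Every $k$-spectrally monomorphic $n$-tournament is transitive.
   Context: An $n$-tournament is a digraph on $n$ vertices in which every pair of distinct vertices is joined by exactly one arc. Its adjacency matrix $A=(a_{ij})$ (w.r.t. an ordering $v_1,\dots,v_n$) has $a_{ij}=1$ if $v_i$ dominates $v_j$ and $0$ otherwise. A tournament is $k$-spectrally monomorphic if all the $k\times k$ principal submatrices of its adjacency matrix have the same characteristic polynomial. A tournament is transitive if whenever $u$ dominates $v$ and $v$ dominates $w$, then $u$ dominates $w$. *)

theory Defs
  imports "Jordan_Normal_Form.Char_Poly" "Jordan_Normal_Form.DL_Submatrix"
begin

definition tournament_matrix :: "nat \<Rightarrow> int mat \<Rightarrow> bool" where
  "tournament_matrix n A \<longleftrightarrow> A \<in> carrier_mat n n \<and>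
     (\<forall>i<n. \<forall>j<n. A $$ (i,j) \<in> {0,1}) \<and>
     (\<forall>i<n. A $$ (i,i) = 0) \<and>
     (\<forall>i<n. \<forall>j<n. i \<noteq> j \<longrightarrow> A $$ (i,j) + A $$ (j,i) = 1)"

definition principal_submatrix :: "'a mat \<Rightarrow> nat set \<Rightarrow> 'a mat" where
  "principal_submatrix A I = submatrix A I I"

definition spectrally_monomorphic :: "nat \<Rightarrow> nat \<Rightarrow> int mat \<Rightarrow> bool" where
  "spectrally_monomorphic n k A \<longleftrightarrow>
     (\<forall>I J. I \<subseteq> {0..<n} \<longrightarrow> J \<subseteq> {0..<n} \<longrightarrow> card I = k \<longrightarrow> card J = k \<longrightarrow>
        char_poly (principal_submatrix A I) = char_poly (principal_submatrix A J))"

definition transitive_tournament :: "nat \<Rightarrow> int mat \<Rightarrow> bool" where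
  "transitive_tournament n A \<longleftrightarrow>
     (\<forall>u<n. \<forall>v<n. \<forall>w<n. A $$ (u,v) = 1 \<longrightarrow> A $$ (v,w) = 1 \<longrightarrow> A $$ (u,w) = 1)"

end

theory Submission
  imports Defs
begin

text \<open>Write \<chi>(J) for the characteristic polynomial of the principal submatrix on J.
  Its derivative is the sum of \<chi>(J - {i}) over i \<in> J, so the (k-r)-th derivative of \<chi>(I)
  is (k-r)! times the sum of \<chi>(J) over the r-subsets J of I. Hence in a k-spectrally
  monomorphic matrix all k-sets have the same sum of \<chi> over their r-subsets, and for
  r \<le> k \<le> n - r this forces \<chi> to be constant on r-sets: the matrix is r-spectrally
  monomorphic. For a tournament and r = 3, the constant term of \<chi>(J) is minus the number of
  directed 3-cycles on J; so either all triples are cyclic, which is impossible on four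
  vertices, or none is.\<close>

lemma carrier_submatrix_square:
  assumes "A \<in> carrier_mat n n" and "I \<subseteq> {0..<n}"
  shows "submatrix A I I \<in> carrier_mat (card I) (card I)"
proof -
  have "{i. i < n \<and> i \<in> I} = I" using assms(2) by auto
  then show ?thesis using carrier_matD[OF assms(1)] unfolding carrier_mat_def by (simp add: dim_submatrix)
qed

lemma submatrix_index_square:
  assumes "A \<in> carrier_mat n n" and "I \<subseteq> {0..<n}" and "i < card I" and "j < card I"
  shows "submatrix A I I $$ (i,j) = A $$ (pick I i, pick I j)"
proof -
  have "{i. i < n \<and> i \<in> I} = I" using assms(2) by auto
  then show ?thesis using assms by (intro submatrix_index) auto
qed

lemma pick_Diff_pick:
  assumes fin: "finite I" and j: "j < card I" and a: "a < card I - 1"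
  shows "pick (I - {pick I j}) a = pick I (if a < j then a else Suc a)"
proof -
  define a' where "a' = (if a < j then a else Suc a)"
  define x where "x = pick I a'"
  define p where "p = pick I j"
  have a': "a' < card I" "a' \<noteq> j" using a j unfolding a'_def by auto
  have xI: "x \<in> I" and cx: "card {y\<in>I. y < x} = a'"
    using pick_in_set[of a' I] card_pick[of a' I] a' unfolding x_def by auto
  have "x \<noteq> p"
    using pick_mono[of a' I j] pick_mono[of j I a'] a' j unfolding x_def p_def
    by (metis nat_neq_iff less_irrefl)
  then have x: "x \<in> I - {p}" using xI by auto
  have "card {y\<in>I - {p}. y < x} = a"
  proof (cases "a < j")
    case True
    then have "x < p" unfolding x_def p_def a'_def using pick_mono[of j I a] j by auto
    then have "{y\<in>I - {p}. y < x} = {y\<in>I. y < x}" by auto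
    then show ?thesis using cx True a'_def by auto
  next
    case False
    then have "p < x" unfolding x_def p_def a'_def using pick_mono[of "Suc a" I j] a' a'_def by auto
    then have "{y\<in>I - {p}. y < x} = {y\<in>I. y < x} - {p}" "p \<in> {y\<in>I. y < x}"
      using pick_in_set[of j I] j unfolding p_def by auto
    then show ?thesis using cx fin False a'_def by (simp add: card_Diff_singleton)
  qed
  then have "pick (I - {p}) a = x" using pick_card_in_set[OF x] by metis
  then show ?thesis unfolding x_def p_def a'_def .
qed

lemma mat_delete_submatrix:
  assumes A: "A \<in> carrier_mat n n" and I: "I \<subseteq> {0..<n}" and j: "j < card I"
  shows "mat_delete (submatrix A I I) j j = submatrix A (I - {pick I j}) (I - {pick I j})"
proof -
  have fin: "finite I" using I finite_subset by blast
  have I': "I - {pick I j} \<subseteq> {0..<n}" using I by auto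
  have card': "card (I - {pick I j}) = card I - 1"
    using pick_in_set[of j I] j fin by simp
  note B = carrier_submatrix_square[OF A I] and B' = carrier_submatrix_square[OF A I', unfolded card']
  show ?thesis
  proof (rule eq_matI)
    fix a b assume "a < dim_row (submatrix A (I - {pick I j}) (I - {pick I j}))"
      "b < dim_col (submatrix A (I - {pick I j}) (I - {pick I j}))"
    then have ab: "a < card I - 1" "b < card I - 1" using B' by auto
    have "mat_delete (submatrix A I I) j j $$ (a,b)
        = submatrix A I I $$ (if a < j then a else Suc a, if b < j then b else Suc b)"
      unfolding mat_delete_def using ab B by auto
    also have "\<dots> = A $$ (pick I (if a < j then a else Suc a), pick I (if b < j then b else Suc b))"
      using ab by (intro submatrix_index_square[OF A I]) auto
    also have "\<dots> = submatrix A (I - {pick I j}) (I - {pick I j}) $$ (a,b)"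
      using ab card' by (subst submatrix_index_square[OF A I']) (auto simp: pick_Diff_pick[OF fin j])
    finally show "mat_delete (submatrix A I I) j j $$ (a,b)
        = submatrix A (I - {pick I j}) (I - {pick I j}) $$ (a,b)" .
  qed (use B B' in auto)
qed

lemma bij_betw_pick: assumes "finite I" shows "bij_betw (pick I) {..<card I} I"
proof -
  have inj: "inj_on (pick I) {..<card I}"
    by (rule inj_onI, metis lessThan_iff nat_neq_iff pick_mono less_irrefl)
  have "pick I ` {..<card I} \<subseteq> I" using pick_in_set by auto
  moreover have "card (pick I ` {..<card I}) = card I" using card_image[OF inj] by simp
  ultimately have "pick I ` {..<card I} = I" using card_subset_eq[OF assms] by simp
  then show ?thesis using inj unfolding bij_betw_def by auto
qed

lemma pderiv_char_poly_submatrix: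
  fixes A :: "'a :: idom mat"
  assumes A: "A \<in> carrier_mat n n" and I: "I \<subseteq> {0..<n}"
  shows "pderiv (char_poly (submatrix A I I)) = (\<Sum>i\<in>I. char_poly (submatrix A (I - {i}) (I - {i})))"
proof -
  have "pderiv (char_poly (submatrix A I I)) = (\<Sum>j<card I. char_poly (mat_delete (submatrix A I I) j j))"
    by (rule pderiv_char_poly[OF carrier_submatrix_square[OF A I]])
  also have "\<dots> = (\<Sum>j<card I. char_poly (submatrix A (I - {pick I j}) (I - {pick I j})))"
    by (simp add: mat_delete_submatrix[OF A I])
  also have "\<dots> = (\<Sum>i\<in>I. char_poly (submatrix A (I - {i}) (I - {i})))"
    using I finite_subset by (intro sum.reindex_bij_betw bij_betw_pick) blast
  finally show ?thesis .
qed

text \<open>Double counting: reindexing the pairs (J, i) with i \<in> J by (J - {i}, i), each s-subset of I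
  occurs once for every i \<in> I outside it.\<close>
lemma sum_card_subsets_remove:
  fixes f :: "'a set \<Rightarrow> 'b :: comm_ring_1"
  assumes fin: "finite I"
  shows "(\<Sum>J\<in>{J. J \<subseteq> I \<and> card J = Suc s}. \<Sum>i\<in>J. f (J - {i}))
       = of_nat (card I - s) * (\<Sum>J\<in>{J. J \<subseteq> I \<and> card J = s}. f J)"
proof -
  have "(\<Sum>J\<in>{J. J \<subseteq> I \<and> card J = Suc s}. \<Sum>i\<in>J. f (J - {i}))
     = (\<Sum>(J,i)\<in>Sigma {J. J \<subseteq> I \<and> card J = Suc s} (\<lambda>J. J). f (J - {i}))"
    using fin by (intro sum.Sigma) (auto intro: finite_subset)
  also have "\<dots> = (\<Sum>(J,i)\<in>Sigma {J. J \<subseteq> I \<and> card J = s} (\<lambda>J. I - J). f J)"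
    by (rule sum.reindex_bij_witness[where i = "\<lambda>(J,i). (insert i J, i)" and j = "\<lambda>(J,i). (J - {i}, i)"])
      (use fin in \<open>auto simp: card_insert_if, metis card_insert_disjoint finite_subset\<close>)
  also have "\<dots> = (\<Sum>J\<in>{J. J \<subseteq> I \<and> card J = s}. \<Sum>i\<in>I - J. f J)"
    using fin by (intro sum.Sigma[symmetric]) (auto intro: finite_subset)
  also have "\<dots> = (\<Sum>J\<in>{J. J \<subseteq> I \<and> card J = s}. of_nat (card I - s) * f J)"
    using fin by (intro sum.cong) (auto simp: card_Diff_subset finite_subset)
  finally show ?thesis by (simp add: sum_distrib_left)
qed

lemma higher_pderiv_char_poly_submatrix:
  fixes A :: "'a :: idom mat"
  assumes A: "A \<in> carrier_mat n n" and I: "I \<subseteq> {0..<n}" and j: "j \<le> card I"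
  shows "(pderiv ^^ j) (char_poly (submatrix A I I)) =
      Polynomial.smult (of_nat (fact j)) (\<Sum>J\<in>{J. J \<subseteq> I \<and> card J = card I - j}. char_poly (submatrix A J J))"
  using j
proof (induction j)
  case 0
  have "finite I" using I finite_subset by blast
  then have "{J. J \<subseteq> I \<and> card J = card I} = {I}" using card_subset_eq by blast
  then show ?case by simp
next
  case (Suc j)
  have fin: "finite I" using I finite_subset by blast
  define s where "s = card I - Suc j"
  have s: "card I - j = Suc s" "card I - s = Suc j" using Suc.prems unfolding s_def by auto
  have "(pderiv ^^ Suc j) (char_poly (submatrix A I I)) = Polynomial.smult (of_nat (fact j))
      (\<Sum>J\<in>{J. J \<subseteq> I \<and> card J = Suc s}. pderiv (char_poly (submatrix A J J)))"
    using Suc by (simp add: s pderiv_smult pderiv_sum)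
  also have "\<dots> = Polynomial.smult (of_nat (fact j))
      (\<Sum>J\<in>{J. J \<subseteq> I \<and> card J = Suc s}. \<Sum>i\<in>J. char_poly (submatrix A (J - {i}) (J - {i})))"
    using I by (intro arg_cong[where f = "Polynomial.smult _"] sum.cong refl pderiv_char_poly_submatrix[OF A]) auto
  also have "\<dots> = Polynomial.smult (of_nat (fact j))
      (of_nat (Suc j) * (\<Sum>J\<in>{J. J \<subseteq> I \<and> card J = s}. char_poly (submatrix A J J)))"
    by (simp only: sum_card_subsets_remove[OF fin, of "\<lambda>J. char_poly (submatrix A J J)"] s)
  also have "\<dots> = Polynomial.smult (of_nat (fact (Suc j))) (\<Sum>J\<in>{J. J \<subseteq> I \<and> card J = s}. char_poly (submatrix A J J))"
    by (simp add: of_nat_poly smult_smult algebra_simps)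
  finally show ?case unfolding s_def .
qed

lemma sum_card_subsets_insert:
  fixes g :: "'a set \<Rightarrow> 'b :: comm_monoid_add"
  assumes fin: "finite S" and a: "a \<notin> S"
  shows "(\<Sum>T\<in>{T. T \<subseteq> insert a S \<and> card T = Suc r}. g T)
       = (\<Sum>T\<in>{T. T \<subseteq> S \<and> card T = Suc r}. g T) + (\<Sum>P\<in>{P. P \<subseteq> S \<and> card P = r}. g (insert a P))"
proof -
  have split: "{T. T \<subseteq> insert a S \<and> card T = Suc r} =
     {T. T \<subseteq> S \<and> card T = Suc r} \<union> insert a ` {P. P \<subseteq> S \<and> card P = r}"
  proof (intro equalityI subsetI)
    fix T assume T: "T \<in> {T. T \<subseteq> insert a S \<and> card T = Suc r}"
    show "T \<in> {T. T \<subseteq> S \<and> card T = Suc r} \<union> insert a ` {P. P \<subseteq> S \<and> card P = r}"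
    proof (cases "a \<in> T")
      case True
      then have "T = insert a (T - {a})" "T - {a} \<subseteq> S" "card (T - {a}) = r"
        using T fin finite_subset by auto
      then show ?thesis by blast
    qed (use T in auto)
  qed (use a fin in \<open>auto simp: card_insert_if, metis card_insert_disjoint finite_subset in_mono\<close>)
  have "inj_on (insert a) {P. P \<subseteq> S \<and> card P = r}"
    using a by (intro inj_onI) auto
  then show ?thesis
    unfolding split using fin a by (subst sum.union_disjoint) (auto simp: sum.reindex)
qed

text \<open>In linear-algebra terms: for r \<le> s \<le> |X| - r the inclusion matrix of r-subsets versus
  s-subsets of X has full rank (Gottlieb, Kantor).\<close>
lemma const_on_card_subsets_if_subset_sums_const:
  fixes g :: "'a set \<Rightarrow> 'b :: {idom, ring_char_0}"
  assumes "finite X" and "r \<le> s" and "s + r \<le> card X"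
    and "\<And>S S'. S \<subseteq> X \<Longrightarrow> S' \<subseteq> X \<Longrightarrow> card S = s \<Longrightarrow> card S' = s \<Longrightarrow>
       (\<Sum>T\<in>{T. T \<subseteq> S \<and> card T = r}. g T) = (\<Sum>T\<in>{T. T \<subseteq> S' \<and> card T = r}. g T)"
    and "T \<subseteq> X" and "T' \<subseteq> X" and "card T = r" and "card T' = r"
  shows "g T = g T'"
  using assms
proof (induction r arbitrary: X s g T T')
  case 0
  then have "T = {}" "T' = {}" using finite_subset by (metis card_0_eq)+
  then show ?case by simp
next
  case (Suc r)
  note finX = Suc.prems(1)
  have swap: "g (insert a P) = g (insert b P)"
    if ab: "a \<in> X" "b \<in> X" "a \<noteq> b" and P: "P \<subseteq> X - {a,b}" "card P = r" for a b P
  proof -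
    define X' where "X' = X - {a,b}"
    define h where "h = (\<lambda>P. g (insert a P) - g (insert b P))"
    have finX': "finite X'" using finX unfolding X'_def by auto
    have cX': "card X' = card X - 2" unfolding X'_def using ab finX by (simp add: card_Diff_subset)
    have zero: "(\<Sum>P\<in>{P. P \<subseteq> S \<and> card P = r}. h P) = 0" if S: "S \<subseteq> X'" "card S = s - 1" for S
    proof -
      have finS: "finite S" using S finX' finite_subset by blast
      have abS: "a \<notin> S" "b \<notin> S" using S unfolding X'_def by auto
      have "insert a S \<subseteq> X" "insert b S \<subseteq> X" "card (insert a S) = s" "card (insert b S) = s"
        using S ab abS finS Suc.prems(2) unfolding X'_def by auto
      then have "(\<Sum>T\<in>{T. T \<subseteq> insert a S \<and> card T = Suc r}. g T)
          = (\<Sum>T\<in>{T. T \<subseteq> insert b S \<and> card T = Suc r}. g T)"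
        using Suc.prems(4) by blast
      then show ?thesis
        unfolding sum_card_subsets_insert[OF finS abS(1)] sum_card_subsets_insert[OF finS abS(2)] h_def
        by (simp add: sum_subtractf)
    qed
    have h_const: "h Q = h P" if "Q \<subseteq> X'" "card Q = r" for Q
    proof (rule Suc.IH[of X' "s - 1" h])
      show "r \<le> s - 1" "s - 1 + r \<le> card X'" using Suc.prems cX' by auto
      show "P \<subseteq> X'" using P(1) unfolding X'_def .
    qed (use finX' zero that P in auto)
    have "s - 1 \<le> card X'" using Suc.prems cX' by auto
    then obtain S0 where S0: "S0 \<subseteq> X'" "card S0 = s - 1" "finite S0" by (rule obtain_subset_with_card_n)
    have "of_nat (card S0 choose r) * h P = (\<Sum>Q\<in>{Q. Q \<subseteq> S0 \<and> card Q = r}. h P)"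
      by (simp add: n_subsets[OF S0(3)])
    also have "\<dots> = (\<Sum>Q\<in>{Q. Q \<subseteq> S0 \<and> card Q = r}. h Q)"
      using S0 h_const by (intro sum.cong) auto
    also have "\<dots> = 0" using zero[OF S0(1,2)] .
    finally have "h P = 0" using S0(2) Suc.prems(2) by auto
    then show ?thesis unfolding h_def by simp
  qed
  have "g T = g T'" if "T \<subseteq> X" "card T = Suc r" "card (T - T') = m" for T m
    using that
  proof (induction m arbitrary: T)
    case 0
    have "finite T'" using Suc.prems finX finite_subset by blast
    moreover have "T \<subseteq> T'" using 0 finX finite_subset by fastforce
    ultimately have "T = T'" using card_subset_eq 0 Suc.prems by metis
    then show ?case by simp
  next
    case (Suc m)
    have finT: "finite T" "finite T'" using Suc.prems \<open>T' \<subseteq> X\<close> finX finite_subset by blast+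
    have "T - T' \<noteq> {}" using Suc.prems(3) by (metis card.empty nat.distinct(1))
    then obtain b where b: "b \<in> T" "b \<notin> T'" by blast
    have "\<not> T' \<subseteq> T" using card_subset_eq[OF finT(1)] Suc.prems \<open>card T' = Suc r\<close> b by metis
    then obtain a where a: "a \<in> T'" "a \<notin> T" by auto
    define P where "P = T - {b}"
    have P: "card P = r" "P \<subseteq> X - {a,b}" using Suc.prems a b finT unfolding P_def by auto
    have ab: "a \<in> X" "b \<in> X" "a \<noteq> b" using a b Suc.prems \<open>T' \<subseteq> X\<close> by auto
    have "g T = g (insert b P)" using b unfolding P_def by (simp add: insert_absorb)
    also have "\<dots> = g (insert a P)" using swap[OF ab P(2,1)] by simp
    also have "\<dots> = g T'"
    proof (rule Suc.IH)
      show "insert a P \<subseteq> X" using P a \<open>T' \<subseteq> X\<close> by auto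
      show "card (insert a P) = Suc r" using P finT unfolding P_def by (auto simp: card_insert_if)
      have "insert a P - T' = (T - T') - {b}" unfolding P_def using a b by auto
      then show "card (insert a P - T') = m" using Suc.prems b finT by auto
    qed
    finally show ?case .
  qed
  then show ?case using Suc.prems by blast
qed

lemma spectrally_monomorphic_smaller:
  assumes A: "A \<in> carrier_mat n n" and "r \<le> k" and "k + r \<le> n"
    and mono: "spectrally_monomorphic n k A"
  shows "spectrally_monomorphic n r A"
proof -
  let ?sum = "\<lambda>I. \<Sum>J\<in>{J. J \<subseteq> I \<and> card J = r}. char_poly (submatrix A J J)"
  have sums: "?sum I = ?sum I'"
    if I: "I \<subseteq> {0..<n}" "I' \<subseteq> {0..<n}" "card I = k" "card I' = k" for I I'
  proof -
    have deriv: "(pderiv ^^ (k - r)) (char_poly (submatrix A J J))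
        = Polynomial.smult (of_nat (fact (k - r))) (?sum J)" if "J \<subseteq> {0..<n}" "card J = k" for J
      using higher_pderiv_char_poly_submatrix[OF A that(1), of "k - r"] that(2) \<open>r \<le> k\<close> by simp
    have "char_poly (submatrix A I I) = char_poly (submatrix A I' I')"
      using mono I unfolding spectrally_monomorphic_def principal_submatrix_def by blast
    then have "Polynomial.smult (of_nat (fact (k - r))) (?sum I)
        = Polynomial.smult (of_nat (fact (k - r))) (?sum I')"
      by (simp only: deriv[OF I(1,3), symmetric] deriv[OF I(2,4), symmetric])
    then show ?thesis by (rule smult_cancel[rotated]) simp
  qed
  show ?thesis
    unfolding spectrally_monomorphic_def principal_submatrix_def
  proof (intro allI impI)
    fix J J' assume J: "J \<subseteq> {0..<n}" "J' \<subseteq> {0..<n}" "card J = r" "card J' = r"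
    show "char_poly (submatrix A J J) = char_poly (submatrix A J' J')"
      by (rule const_on_card_subsets_if_subset_sums_const[where g = "\<lambda>J. char_poly (submatrix A J J)",
          OF finite_atLeastLessThan \<open>r \<le> k\<close> _ sums]) (use J \<open>k + r \<le> n\<close> in simp_all)
  qed
qed

lemma det_3x3:
  fixes B :: "'a :: comm_ring_1 mat"
  assumes B: "B \<in> carrier_mat 3 3"
  shows "det B = B$$(0,0)*B$$(1,1)*B$$(2,2) - B$$(0,0)*B$$(1,2)*B$$(2,1)
    - B$$(1,0)*B$$(0,1)*B$$(2,2) + B$$(1,0)*B$$(0,2)*B$$(2,1)
    + B$$(2,0)*B$$(0,1)*B$$(1,2) - B$$(2,0)*B$$(0,2)*B$$(1,1)"
proof -
  have det2: "det C = C$$(0,0)*C$$(1,1) - C$$(1,0)*C$$(0,1)" if C: "C \<in> carrier_mat 2 2" for C :: "'a mat"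
    using C by (subst laplace_expansion_column[OF C, of 0])
      (auto simp: numeral_2_eq_2 cofactor_def mat_delete_def det_single)
  have "det B = B $$ (0,0) * cofactor B 0 0 + B $$ (1,0) * cofactor B 1 0 + B $$ (2,0) * cofactor B 2 0"
    by (subst laplace_expansion_column[OF B, of 0]) (simp_all add: numeral_3_eq_3 numeral_2_eq_2)
  also have "cofactor B 0 0 = B$$(1,1)*B$$(2,2) - B$$(2,1)*B$$(1,2)"
    unfolding cofactor_def using B by (subst det2) (auto simp: mat_delete_def numeral_2_eq_2)
  also have "cofactor B 1 0 = -(B$$(0,1)*B$$(2,2) - B$$(2,1)*B$$(0,2))"
    unfolding cofactor_def using B by (subst det2) (auto simp: mat_delete_def numeral_2_eq_2)
  also have "cofactor B 2 0 = B$$(0,1)*B$$(1,2) - B$$(1,1)*B$$(0,2)"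
    unfolding cofactor_def using B by (subst det2) (auto simp: mat_delete_def numeral_2_eq_2)
  finally show ?thesis by (simp add: algebra_simps)
qed

lemma poly_char_poly_0:
  fixes S :: "'a :: comm_ring_1 mat"
  assumes "S \<in> carrier_mat m m"
  shows "poly (char_poly S) 0 = det (- S)"
  unfolding char_poly_def using assms
  by (intro poly_det_cong[of _ m]) (auto simp: char_poly_matrix_def)

lemma pick_set_sorted:
  assumes sorted: "sorted_wrt (<) xs" and i: "i < length xs"
  shows "pick (set xs) i = xs ! i"
proof -
  have "{a \<in> set xs. a < xs ! i} = (!) xs ` {..<i}"
  proof (intro equalityI subsetI)
    fix a assume "a \<in> {a \<in> set xs. a < xs ! i}"
    then obtain j where "j < length xs" "a = xs ! j" "xs ! j < xs ! i" by (auto simp: in_set_conv_nth)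
    then have "j < i" using sorted i by (metis not_less_iff_gr_or_eq sorted_wrt_nth_less)
    then show "a \<in> (!) xs ` {..<i}" using \<open>a = xs ! j\<close> by auto
  qed (use sorted i in \<open>auto simp: sorted_wrt_nth_less\<close>)
  moreover have "inj_on ((!) xs) {..<i}"
    using sorted i by (auto intro!: inj_onI simp: nth_eq_iff_index_eq strict_sorted_iff)
  ultimately have "card {a \<in> set xs. a < xs ! i} = i" by (simp add: card_image)
  then show ?thesis using pick_card_in_set[of "xs ! i" "set xs"] i by simp
qed

lemma submatrix_sorted_3:
  assumes A: "A \<in> carrier_mat n n" and "u < v" "v < w" "w < n"
  shows "submatrix A {u,v,w} {u,v,w} = mat 3 3 (\<lambda>(i,j). A $$ ([u,v,w] ! i, [u,v,w] ! j))"
proof -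
  have I: "{u,v,w} \<subseteq> {0..<n}" "card {u,v,w} = 3" using assms by auto
  have pick: "pick {u,v,w} i = [u,v,w] ! i" if "i < 3" for i
    using pick_set_sorted[of "[u,v,w]" i] assms that by simp
  show ?thesis
    using carrier_submatrix_square[OF A I(1)] I
    by (intro eq_matI) (auto simp: submatrix_index_square[OF A I(1)] pick)
qed

lemma three_distinct_wlog:
  fixes x y z :: "'a :: linorder"
  assumes "\<And>a b c. a < b \<Longrightarrow> b < c \<Longrightarrow> P a b c"
    and "\<And>a b c. P a b c \<Longrightarrow> P b a c" and "\<And>a b c. P a b c \<Longrightarrow> P a c b"
    and "x \<noteq> y" and "y \<noteq> z" and "x \<noteq> z"
  shows "P x y z"
  using assms by (metis linorder_neqE)

lemma poly_char_poly_submatrix_3_0: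
  fixes A :: "'a :: comm_ring_1 mat"
  assumes A: "A \<in> carrier_mat n n" and diag: "\<And>i. i < n \<Longrightarrow> A $$ (i,i) = 0"
    and "x < n" "y < n" "z < n" "x \<noteq> y" "y \<noteq> z" "x \<noteq> z"
  shows "poly (char_poly (submatrix A {x,y,z} {x,y,z})) 0 =
     - (A$$(x,y)*A$$(y,z)*A$$(z,x) + A$$(x,z)*A$$(z,y)*A$$(y,x))"
proof -
  have sorted: "poly (char_poly (submatrix A {a,b,c} {a,b,c})) 0 =
     - (A$$(a,b)*A$$(b,c)*A$$(c,a) + A$$(a,c)*A$$(c,b)*A$$(b,a))" if "a < b" "b < c" "c < n" for a b c
    using that diag[of a] diag[of b] diag[of c]
    by (simp add: submatrix_sorted_3[OF A that] poly_char_poly_0[of _ 3] det_3x3 algebra_simps)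
  show ?thesis
    using assms(3-) three_distinct_wlog[where P = "\<lambda>x y z. x < n \<longrightarrow> y < n \<longrightarrow> z < n \<longrightarrow>
        poly (char_poly (submatrix A {x,y,z} {x,y,z})) 0 =
        - (A$$(x,y)*A$$(y,z)*A$$(z,x) + A$$(x,z)*A$$(z,y)*A$$(y,x))"]
    by (simp add: sorted insert_commute algebra_simps)
qed

lemma transitive_if_3_spectrally_monomorphic:
  assumes T: "tournament_matrix n A" and n: "4 \<le> n" and mono: "spectrally_monomorphic n 3 A"
  shows "transitive_tournament n A"
  unfolding transitive_tournament_def
proof (intro allI impI)
  have A: "A \<in> carrier_mat n n" and diag: "\<And>i. i < n \<Longrightarrow> A $$ (i,i) = 0"
    and bin: "\<And>i j. i < n \<Longrightarrow> j < n \<Longrightarrow> A $$ (i,j) = 0 \<or> A $$ (i,j) = 1"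
    and comp: "\<And>i j. i < n \<Longrightarrow> j < n \<Longrightarrow> i \<noteq> j \<Longrightarrow> A $$ (i,j) + A $$ (j,i) = 1"
    using T unfolding tournament_matrix_def by auto
  define g where "g J = poly (char_poly (submatrix A J J)) 0" for J
  note g3 = poly_char_poly_submatrix_3_0[OF A diag, folded g_def]
  have g_eq: "g J = g J'" if "J \<subseteq> {0..<n}" "J' \<subseteq> {0..<n}" "card J = 3" "card J' = 3" for J J'
    using mono that unfolding g_def spectrally_monomorphic_def principal_submatrix_def by metis
  fix u v w assume uvw: "u < n" "v < n" "w < n" "A $$ (u,v) = 1" "A $$ (v,w) = 1"
  have dist: "u \<noteq> v" "v \<noteq> w" "u \<noteq> w" using uvw diag comp[of u v] by force+
  show "A $$ (u,w) = 1"
  proof (rule ccontr)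
    assume "A $$ (u,w) \<noteq> 1"
    then have arcs: "A $$ (u,w) = 0" "A $$ (v,u) = 0" "A $$ (w,v) = 0" "A $$ (w,u) = 1"
      using bin[of u w] comp[of u v] comp[of v w] comp[of u w] uvw dist by auto
    have "card {u,v,w} = 3" using dist by simp
    then have "\<not> {0..<n} \<subseteq> {u,v,w}" using card_mono[of "{u,v,w}" "{0..<n}"] n by auto
    then obtain x where "x \<in> {0..<n} - {u,v,w}" by blast
    then have x: "x < n" "x \<noteq> u" "x \<noteq> v" "x \<noteq> w" by auto
    text \<open>The triple {u,v,w} is a 3-cycle, so all triples are; but then both v \<rightarrow> x and x \<rightarrow> v.\<close>
    have cyclic: "g {u,v,w} = -1" using g3[of u v w] uvw dist arcs by simp
    have "g {u,v,x} = -1" using g_eq[of "{u,v,x}" "{u,v,w}"] cyclic uvw x dist by simp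
    then have "A$$(v,x) * A$$(x,u) = 1" using g3[of u v x] uvw x dist arcs by simp
    moreover have "g {v,w,x} = -1" using g_eq[of "{v,w,x}" "{u,v,w}"] cyclic uvw x dist by simp
    then have "A$$(w,x) * A$$(x,v) = 1" using g3[of v w x] uvw x dist arcs by simp
    ultimately show False using comp[of v x] bin[of v x] bin[of x v] uvw x by auto
  qed
qed

theorem proposition3p1:
  fixes n k :: nat and A :: "int mat"
  assumes "n \<ge> 6" and "3 \<le> k" and "k \<le> n - 3"
    and "tournament_matrix n A"
    and "spectrally_monomorphic n k A"
  shows "transitive_tournament n A"
proof -
  have "A \<in> carrier_mat n n" using assms(4) unfolding tournament_matrix_def by simp
  then have "spectrally_monomorphic n 3 A"
    using spectrally_monomorphic_smaller[of A n 3 k] assms(1-3,5) by simp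
  then show ?thesis using transitive_if_3_spectrally_monomorphic assms(1,4) by simp
qed

end
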